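(* For $d\ge1$ let $\tilde{\mathcal T}_d:[0,1]\to\mathbb R$ be defined by $\tilde{\mathcal T}_d(x)=\frac{1}{d+1}\frac{\partial}{\partial q}F^{(d)}_q(x)\big|_{q=1/(d+1)}$. Then $$\lim_{d\to\infty}\ \sup_{x\in[0,1]}\big|\tilde{\mathcal T}_d(x)-x(1-x)\big|=0.$$
   Context: Fix $d\ge1$. For $q\in(0,1)$ let $t_q\in(0,1)$ be the unique solution in $(0,1)$ of $q^d+q^{d-1}t+\dots+t^d=q^{d-1}$ (so $t_q=q$ when $q=1/(d+1)$). Let $\nu^{(d)}_q$ be the product measure on $\{0,1,\dots,d\}^{\mathbb N}$ with i.i.d. coordinates, $\nu^{(d)}_q(\omega_i=m)=t_q^m/q^{m-1}$ for $m=0,\dots,d$. Let $F^{(d)}_q(x)=\nu^{(d)}_q\big(\{\omega:\sum_{i\ge1}\omega_i(d+1)^{-i}\le x\}\big)$, $x\in[0,1]$. Equivalently, writing $x=\sum_j\omega_j(d+1)^{-j}$ in base $d+1$ and $b=t_q/q$, $F^{(d)}_q(x)=\sum_{j\ge1}\big(\sum_{i=0}^{\omega_j-1}b^i\big)q^jb^{s^1_j+2s^2_j+\dots+ds^d_j-\omega_j}$, where $s^m_j$ is the number of occurrences of $m$ among $\omega_1,\dots,\omega_j$. (For $d=1$, $2\tilde{\mathcal T}_1$ is the Takagi function.) *)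

theory Defs
  imports "HOL-Probability.Probability"
begin

definition t_sol :: "nat \<Rightarrow> real \<Rightarrow> real" where
  "t_sol d q = (THE t. 0 < t \<and> t < 1 \<and> (\<Sum>k\<le>d. q ^ (d - k) * t ^ k) = q ^ (d - 1))"

definition digit_pmf :: "nat \<Rightarrow> real \<Rightarrow> nat pmf" where
  "digit_pmf d q = embed_pmf (\<lambda>m. if m \<le> d then t_sol d q ^ m * q / q ^ m else 0)"

text \<open>The i.i.d. product measure nu_q^(d); coordinate i (0-based) is omega_(i+1).\<close>
definition nu :: "nat \<Rightarrow> real \<Rightarrow> (nat \<Rightarrow> nat) measure" where
  "nu d q = (\<Pi>\<^sub>M i\<in>(UNIV::nat set). measure_pmf (digit_pmf d q))"

definition F :: "nat \<Rightarrow> real \<Rightarrow> real \<Rightarrow> real" where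
  "F d q x = measure (nu d q)
     {\<omega> \<in> space (nu d q). (\<Sum>i. real (\<omega> i) / real (d + 1) ^ Suc i) \<le> x}"

definition Ttilde :: "nat \<Rightarrow> real \<Rightarrow> real" where
  "Ttilde d x = 1 / real (d + 1) * deriv (\<lambda>q. F d q x) (1 / real (d + 1))"

end

theory Submission
  imports Defs
begin

text \<open>
  The distribution function is self-similar,
  \<open>F q x = (\<Sum>m\<le>d. p m q * F q ((d+1) x - m))\<close> with digit weights \<open>p m q = t\<^sub>q\<^sup>m / q\<^sup>m\<^sup>-\<^sup>1\<close>,
  and at \<open>q\<^sub>0 = 1/(d+1)\<close> all weights equal \<open>q\<^sub>0\<close>, so that \<open>F q\<^sub>0\<close> is the uniform distribution
  function.  Every estimate is an instance of one contraction principle along the shift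
  \<open>T x = (d+1) x mod 1\<close>: a bounded \<open>E\<close> with \<open>\<bar>E x\<bar> \<le> c + \<bar>E (T x)\<bar> / (d+1)\<close> satisfies
  \<open>\<bar>E\<bar> \<le> c (d+1) / d\<close>.  Applied to the difference quotient in \<open>q\<close>, it identifies the
  derivative at \<open>q\<^sub>0\<close> with the series solution \<open>G\<close> of \<open>G = \<phi> + G \<circ> T / (d+1)\<close>, where \<open>\<phi>\<close>
  is built from \<open>\<partial>\<^sub>q p m q\<^sub>0 = 1 - 2m/d\<close>.  Summing these derivatives over the digits below
  \<open>(d+1) x\<close> gives \<open>\<phi> x = ((d+1)\<^sup>2 x (1-x) - T x (1 - T x)) / d\<close>, and the same principle applied
  to \<open>G x / (d+1) - x (1-x)\<close> bounds it by \<open>1/d\<close>.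
\<close>

lemma abs_le_of_contraction:
  fixes E :: "'a \<Rightarrow> real" and T :: "'a \<Rightarrow> 'a"
  assumes B: "B > 1" and c: "c \<ge> 0"
    and bounded: "\<And>x. x \<in> S \<Longrightarrow> \<bar>E x\<bar> \<le> M"
    and maps_to: "\<And>x. x \<in> S \<Longrightarrow> T x \<in> S"
    and contracts: "\<And>x. x \<in> S \<Longrightarrow> \<bar>E x\<bar> \<le> c + \<bar>E (T x)\<bar> / B"
    and x: "x \<in> S"
  shows "\<bar>E x\<bar> \<le> c * B / (B - 1)"
proof -
  have iterate: "\<bar>E x\<bar> \<le> c * B / (B - 1) + M / B ^ n" if "x \<in> S" for n x
    using that
  proof (induction n arbitrary: x)
    case 0
    have "0 \<le> c * B / (B - 1)" using B c by simp
    then show ?case using bounded[OF 0] by simp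
  next
    case (Suc n)
    have "\<bar>E x\<bar> \<le> c + \<bar>E (T x)\<bar> / B" by (rule contracts[OF Suc.prems])
    also have "\<dots> \<le> c + (c * B / (B - 1) + M / B ^ n) / B"
      using Suc.IH[OF maps_to[OF Suc.prems]] B by (intro add_left_mono divide_right_mono) auto
    also have "\<dots> = c * B / (B - 1) + M / B ^ Suc n"
      using B by (simp add: field_simps)
    finally show ?case .
  qed
  have "(\<lambda>n. c * B / (B - 1) + M / B ^ n) \<longlonglongrightarrow> c * B / (B - 1) + 0"
    by (intro tendsto_intros LIMSEQ_divide_realpow_zero B)
  then show ?thesis
    unfolding add_0_right
    by (rule LIMSEQ_le[OF tendsto_const]) (use iterate[OF x] in auto)
qed

definition geom_poly :: "nat \<Rightarrow> real \<Rightarrow> real" where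
  "geom_poly d b = (\<Sum>m\<le>d. b ^ m)"

definition geom_poly_inv :: "nat \<Rightarrow> real \<Rightarrow> real" where
  "geom_poly_inv d y = (THE b. 0 < b \<and> geom_poly d b = y)"

lemma geom_poly_0 [simp]: "geom_poly d 0 = 1"
  by (simp add: geom_poly_def sum.atMost_shift)

lemma geom_poly_1 [simp]: "geom_poly d 1 = real d + 1"
  by (simp add: geom_poly_def)

lemma isCont_geom_poly: "isCont (geom_poly d) b"
  unfolding geom_poly_def by (intro continuous_intros)

lemma DERIV_geom_poly: "DERIV (geom_poly d) b :> (\<Sum>m\<le>d. real m * b ^ (m - 1))"
  unfolding geom_poly_def[abs_def] by (auto intro!: derivative_eq_intros)

lemma sum_of_nat_lessThan: "(\<Sum>m<k. real m) = real k * (real k - 1) / 2"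
  by (induction k) (auto simp: field_simps)

context
  fixes d :: nat
  assumes d: "d \<ge> 1"
begin

lemma geom_poly_strict_mono: "0 \<le> b \<Longrightarrow> b < c \<Longrightarrow> geom_poly d b < geom_poly d c"
  unfolding geom_poly_def
  by (rule sum_strict_mono_ex1) (use d in \<open>auto intro: power_mono intro!: bexI[of _ 1]\<close>)

lemma geom_poly_ge: "0 \<le> b \<Longrightarrow> 1 + b \<le> geom_poly d b"
proof -
  have "(\<Sum>m\<in>{0,1}. b ^ m) \<le> (\<Sum>m\<le>d. b ^ m)" if "0 \<le> b"
    using d that by (intro sum_mono2) auto
  then show "0 \<le> b \<Longrightarrow> 1 + b \<le> geom_poly d b" by (simp add: geom_poly_def)
qed

lemma geom_poly_inv_eqI:
  assumes "0 < b" "geom_poly d b = y"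
  shows "geom_poly_inv d y = b"
  unfolding geom_poly_inv_def
proof (rule the_equality)
  fix c assume "0 < c \<and> geom_poly d c = y"
  then consider "c = b" | "c < b" | "b < c" by linarith
  then show "c = b"
    using assms geom_poly_strict_mono[of b c] geom_poly_strict_mono[of c b] \<open>0 < c \<and> _\<close>
    by cases auto
qed (use assms in auto)

lemma geom_poly_inv:
  assumes "y > 1"
  shows "0 < geom_poly_inv d y" "geom_poly d (geom_poly_inv d y) = y"
proof -
  have "\<exists>b\<ge>0. b \<le> y \<and> geom_poly d b = y"
    using geom_poly_ge[of y] assms by (intro IVT) (auto intro: isCont_geom_poly)
  then obtain b where b: "0 \<le> b" "geom_poly d b = y" by blast
  with assms have "b > 0" by (cases "b = 0") auto
  with b show "0 < geom_poly_inv d y" "geom_poly d (geom_poly_inv d y) = y"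
    by (simp_all add: geom_poly_inv_eqI)
qed

lemma geom_poly_inv_at_Suc: "geom_poly_inv d (real d + 1) = 1"
  by (rule geom_poly_inv_eqI) simp_all

lemma DERIV_geom_poly_inv:
  "DERIV (geom_poly_inv d) (real d + 1) :> 2 / (real d * (real d + 1))"
proof -
  have D: "DERIV (geom_poly d) (geom_poly_inv d (real d + 1)) :> real d * (real d + 1) / 2"
  proof -
    have "(\<Sum>m\<le>d. real m) = real d * (real d + 1) / 2"
      using sum_of_nat_lessThan[of "Suc d"] by (simp add: lessThan_Suc_atMost mult.commute)
    with DERIV_geom_poly[of d 1] show ?thesis by (simp add: geom_poly_inv_at_Suc)
  qed
  have "0 < z" if "\<bar>z - 1\<bar> \<le> 1/2" for z :: real
    using that by arith
  then have cont: "isCont (geom_poly_inv d) (geom_poly d 1)"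
    by (intro isCont_inverse_function[where f="geom_poly d" and x=1 and d="1/2"])
       (auto intro!: geom_poly_inv_eqI isCont_geom_poly)
  have "DERIV (geom_poly_inv d) (real d + 1) :> inverse (real d * (real d + 1) / 2)"
    by (rule DERIV_inverse_function[where f="geom_poly d" and g="geom_poly_inv d", OF D, where a=1 and b="real d + 2"])
       (use d cont geom_poly_inv in auto)
  then show ?thesis by simp
qed

end

text \<open>With \<open>b = t\<^sub>q / q\<close> the equation defining \<open>t\<^sub>q\<close> reads \<open>geom_poly d b = 1 / q\<close>,
  so the weight \<open>t\<^sub>q\<^sup>m / q\<^sup>m\<^sup>-\<^sup>1\<close> of the digit \<open>m\<close> is \<open>q b\<^sup>m\<close>.\<close>
definition digit_weight :: "nat \<Rightarrow> real \<Rightarrow> nat \<Rightarrow> real" where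
  "digit_weight d q m = q * geom_poly_inv d (1 / q) ^ m"

definition weight_deriv :: "nat \<Rightarrow> nat \<Rightarrow> real" where
  "weight_deriv d m = 1 - 2 * real m / real d"

context
  fixes d :: nat
  assumes d: "d \<ge> 1"
begin

context
  fixes q :: real
  assumes q: "0 < q" "q < 1"
begin

lemma geom_poly_inv_recip: "0 < geom_poly_inv d (1 / q)" "geom_poly d (geom_poly_inv d (1 / q)) = 1 / q"
  using geom_poly_inv[OF d, of "1 / q"] q by simp_all

lemma t_sol_eq: "t_sol d q = q * geom_poly_inv d (1 / q)"
  unfolding t_sol_def
proof (rule the_equality)
  have scaled: "(\<Sum>k\<le>d. q ^ (d - k) * (q * c) ^ k) = q ^ d * geom_poly d c" for c
    unfolding geom_poly_def sum_distrib_left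
    by (rule sum.cong) (auto simp: power_mult_distrib power_add[symmetric])
  have qd: "q ^ d = q * q ^ (d - 1)"
    using d by (cases d) auto
  let ?b = "geom_poly_inv d (1 / q)"
  have "?b < 1 / q"
    using geom_poly_ge[OF d, of ?b] geom_poly_inv_recip by auto
  then have "q * ?b < 1"
    using q by (simp add: field_simps)
  then show "0 < q * ?b \<and> q * ?b < 1 \<and> (\<Sum>k\<le>d. q ^ (d - k) * (q * ?b) ^ k) = q ^ (d - 1)"
    using geom_poly_inv_recip q by (simp add: scaled qd)
  fix t
  assume t: "0 < t \<and> t < 1 \<and> (\<Sum>k\<le>d. q ^ (d - k) * t ^ k) = q ^ (d - 1)"
  then have "q ^ d * geom_poly d (t / q) = q ^ (d - 1)"
    using scaled[of "t / q"] q by simp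
  then have "geom_poly d (t / q) = 1 / q"
    using q by (simp add: qd field_simps)
  then have "?b = t / q"
    using geom_poly_inv_eqI[OF d, of "t / q"] t q by simp
  then show "t = q * ?b"
    using q by simp
qed

lemma digit_weight_nonneg: "digit_weight d q m \<ge> 0"
  using geom_poly_inv_recip q by (simp add: digit_weight_def)

lemma sum_digit_weight: "(\<Sum>m\<le>d. digit_weight d q m) = 1"
  using geom_poly_inv_recip q
  by (simp add: digit_weight_def geom_poly_def sum_distrib_left[symmetric])

lemma pmf_digit_pmf: "pmf (digit_pmf d q) m = (if m \<le> d then digit_weight d q m else 0)"
proof -
  have weights: "(\<lambda>m. if m \<le> d then t_sol d q ^ m * q / q ^ m else 0)
      = (\<lambda>m. if m \<le> d then digit_weight d q m else 0)"
    using q by (auto simp: t_sol_eq digit_weight_def power_mult_distrib)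
  have "(\<integral>\<^sup>+ m. ennreal (if m \<le> d then digit_weight d q m else 0) \<partial>count_space UNIV)
      = (\<Sum>m\<le>d. ennreal (digit_weight d q m))"
    by (subst nn_integral_count_space'[where A="{..d}"]) auto
  also have "\<dots> = 1"
    using sum_digit_weight digit_weight_nonneg by (subst sum_ennreal) auto
  finally show ?thesis
    unfolding digit_pmf_def weights by (subst pmf_embed_pmf) (auto simp: digit_weight_nonneg)
qed

end

lemma digit_weight_at_uniform: "digit_weight d (1 / real (d + 1)) m = 1 / real (d + 1)"
  using geom_poly_inv_at_Suc[OF d] by (simp add: digit_weight_def add.commute)

lemma DERIV_digit_weight:
  "DERIV (\<lambda>q. digit_weight d q m) (1 / real (d + 1)) :> weight_deriv d m"
proof -
  let ?q0 = "1 / real (d + 1)"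
  have recip: "DERIV (\<lambda>q. 1 / q) ?q0 :> - ((real d + 1) ^ 2)"
    by (auto intro!: derivative_eq_intros simp: field_simps power2_eq_square)
  have "DERIV (geom_poly_inv d) (1 / ?q0) :> 2 / (real d * (real d + 1))"
    using DERIV_geom_poly_inv[OF d] by (simp add: add.commute)
  from DERIV_chain2[OF this recip]
  have inv: "DERIV (\<lambda>q. geom_poly_inv d (1 / q)) ?q0 :> 2 / (real d * (real d + 1)) * - ((real d + 1) ^ 2)" .
  have "DERIV (\<lambda>q. q * geom_poly_inv d (1 / q) ^ m) ?q0 :>
      geom_poly_inv d (1 / ?q0) ^ m
      + ?q0 * (real m * geom_poly_inv d (1 / ?q0) ^ (m - 1) * (2 / (real d * (real d + 1)) * - ((real d + 1) ^ 2)))"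
    by (rule derivative_eq_intros refl inv | simp add: field_simps)+
  moreover have "geom_poly_inv d (1 / ?q0) = 1"
    using geom_poly_inv_at_Suc[OF d] by (simp add: add.commute)
  moreover have "1 + ?q0 * (real m * 1 * (2 / (real d * (real d + 1)) * - ((real d + 1) ^ 2)))
      = 1 - 2 * real m / real d"
  proof -
    have "real d > 0" "real d + 1 > 0"
      using d by linarith+
    then show ?thesis by (simp add: power2_eq_square divide_simps) (simp add: algebra_simps)
  qed
  ultimately show ?thesis
    unfolding digit_weight_def weight_deriv_def by simp
qed

end

definition base_value :: "nat \<Rightarrow> (nat \<Rightarrow> nat) \<Rightarrow> real" where
  "base_value d \<omega> = (\<Sum>i. real (\<omega> i) / real (d + 1) ^ Suc i)"

lemma measurable_base_value [measurable]: "base_value d \<in> borel_measurable (nu d q)"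
  unfolding base_value_def nu_def by measurable

lemma prob_space_nu: "prob_space (nu d q)"
  unfolding nu_def by (intro prob_space_PiM prob_space_measure_pmf)

lemma F_eq_measure_base_value:
  "F d q x = measure (nu d q) {\<omega> \<in> space (nu d q). base_value d \<omega> \<le> x}"
  by (simp add: F_def base_value_def)

context
  fixes d :: nat
  assumes d: "d \<ge> 1"
begin

lemma sums_max_digits: "(\<lambda>i. real d / real (d + 1) ^ Suc i) sums 1"
proof -
  have "(\<lambda>i. real d / real (d + 1) * (1 / real (d + 1)) ^ i)
      sums (real d / real (d + 1) * (1 / (1 - 1 / real (d + 1))))"
    using d by (intro sums_mult geometric_sums) auto
  moreover have "real d / real (d + 1) * (1 / (1 - 1 / real (d + 1))) = 1"
    using d by (simp add: divide_simps)
  ultimately show ?thesis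
    by (simp add: power_one_over)
qed

context
  fixes \<omega> :: "nat \<Rightarrow> nat"
  assumes digits: "\<forall>i. \<omega> i \<le> d"
begin

lemma summable_base_value: "summable (\<lambda>i. real (\<omega> i) / real (d + 1) ^ Suc i)"
  and base_value_nonneg: "0 \<le> base_value d \<omega>"
  and base_value_le_1: "base_value d \<omega> \<le> 1"
proof -
  have le: "real (\<omega> i) / real (d + 1) ^ Suc i \<le> real d / real (d + 1) ^ Suc i" for i
    using digits by (intro divide_right_mono) auto
  show summable: "summable (\<lambda>i. real (\<omega> i) / real (d + 1) ^ Suc i)"
    by (rule summable_comparison_test'[OF sums_summable[OF sums_max_digits]]) (use le in auto)
  show "0 \<le> base_value d \<omega>"
    unfolding base_value_def by (intro suminf_nonneg summable) auto
  show "base_value d \<omega> \<le> 1"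
    unfolding base_value_def sums_unique[OF sums_max_digits]
    by (intro suminf_le summable le sums_summable[OF sums_max_digits])
qed

lemma base_value_Cons: "base_value d (case_nat m \<omega>) = (real m + base_value d \<omega>) / real (d + 1)"
proof -
  let ?f = "\<lambda>i. real (case_nat m \<omega> i) / real (d + 1) ^ Suc i"
  have tail: "(\<lambda>i. ?f (Suc i)) = (\<lambda>i. real (\<omega> i) / real (d + 1) ^ Suc i / real (d + 1))"
    by (auto simp: field_simps)
  have "summable ?f"
    unfolding summable_Suc_iff[of ?f, symmetric] tail
    by (intro summable_divide summable_base_value)
  then have "base_value d (case_nat m \<omega>) = ?f 0 + (\<Sum>i. ?f (Suc i))"
    unfolding base_value_def suminf_split_head[OF \<open>summable ?f\<close>] by simp
  also have "(\<Sum>i. ?f (Suc i)) = base_value d \<omega> / real (d + 1)"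
    unfolding tail base_value_def by (rule suminf_divide[OF summable_base_value])
  finally show ?thesis
    by (simp add: add_divide_distrib)
qed

end

context
  fixes q :: real
  assumes q: "0 < q" "q < 1"
begin

interpretation nu: prob_space "nu d q"
  by (rule prob_space_nu)

lemma AE_nu_digits_le: "AE \<omega> in nu d q. \<forall>i. \<omega> i \<le> d"
  unfolding AE_all_countable nu_def
proof
  fix i :: nat
  interpret sequence_space "measure_pmf (digit_pmf d q)" ..
  have "AE m in measure_pmf (digit_pmf d q). m \<le> d"
    by (auto simp: AE_measure_pmf_iff set_pmf_iff pmf_digit_pmf[OF d q] split: if_splits)
  then show "AE \<omega> in \<Pi>\<^sub>M i\<in>UNIV. measure_pmf (digit_pmf d q). \<omega> i \<le> d"
    using AE_component[of i "\<lambda>m. m \<le> d"] by simp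
qed

lemma F_nonneg: "0 \<le> F d q x"
  by (simp add: F_def)

lemma F_le_1: "F d q x \<le> 1"
  unfolding F_def by (rule nu.prob_le_1)

lemma F_eq_0: "x < 0 \<Longrightarrow> F d q x = 0"
  unfolding F_eq_measure_base_value
  by (subst measure_eq_AE[where B="{}"])
     (use AE_nu_digits_le in \<open>auto elim!: eventually_mono dest!: base_value_nonneg\<close>)

lemma F_eq_1: "1 \<le> x \<Longrightarrow> F d q x = 1"
  unfolding F_eq_measure_base_value
  by (subst measure_eq_AE[where B="space (nu d q)"])
     (use AE_nu_digits_le in \<open>auto elim!: eventually_mono dest!: base_value_le_1
        simp: nu.prob_space\<close>)

lemma emeasure_first_digit:
  "emeasure (nu d q) {\<omega> \<in> space (nu d q). base_value d (case_nat s \<omega>) \<le> x}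
    = ennreal (F d q (real (d + 1) * x - real s))"
proof -
  have [measurable]: "case_nat s \<in> nu d q \<rightarrow>\<^sub>M nu d q"
    unfolding nu_def by measurable
  have "emeasure (nu d q) {\<omega> \<in> space (nu d q). base_value d (case_nat s \<omega>) \<le> x}
      = emeasure (nu d q) {\<omega> \<in> space (nu d q). base_value d \<omega> \<le> real (d + 1) * x - real s}"
  proof (rule emeasure_eq_AE)
    show "AE \<omega> in nu d q. (\<omega> \<in> {\<omega> \<in> space (nu d q). base_value d (case_nat s \<omega>) \<le> x})
        = (\<omega> \<in> {\<omega> \<in> space (nu d q). base_value d \<omega> \<le> real (d + 1) * x - real s})"
      using AE_nu_digits_le
    proof eventually_elim
      case (elim \<omega>)
      have "base_value d (case_nat s \<omega>) \<le> x \<longleftrightarrow> real s + base_value d \<omega> \<le> x * real (d + 1)"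
        unfolding base_value_Cons[OF elim] by (rule pos_divide_le_eq) simp
      then show ?case
        by (auto simp: space_PiM nu_def algebra_simps)
    qed
  qed measurable
  then show ?thesis
    by (simp add: F_eq_measure_base_value nu.emeasure_eq_measure)
qed

lemma F_self_similar:
  "F d q x = (\<Sum>m\<le>d. digit_weight d q m * F d q (real (d + 1) * x - real m))"
proof -
  let ?M = "measure_pmf (digit_pmf d q)"
  interpret sequence_space ?M ..
  have nu: "nu d q = PiM UNIV (\<lambda>_. ?M)"
    by (simp add: nu_def)
  let ?A = "{\<omega> \<in> space (nu d q). base_value d \<omega> \<le> x}"
  let ?E = "(\<lambda>(s, \<omega>). case_nat s \<omega>) -` ?A \<inter> space (?M \<Otimes>\<^sub>M nu d q)"
  have [measurable]: "(\<lambda>(s, \<omega>). case_nat s \<omega>) \<in> ?M \<Otimes>\<^sub>M nu d q \<rightarrow>\<^sub>M nu d q"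
    unfolding nu by measurable
  have "emeasure (nu d q) ?A = emeasure (distr (?M \<Otimes>\<^sub>M nu d q) (nu d q) (\<lambda>(s, \<omega>). case_nat s \<omega>)) ?A"
    unfolding nu PiM_iter ..
  also have "\<dots> = emeasure (?M \<Otimes>\<^sub>M nu d q) ?E"
    by (rule emeasure_distr) measurable
  also have "\<dots> = (\<integral>\<^sup>+ s. emeasure (nu d q) (Pair s -` ?E) \<partial>?M)"
  proof -
    have "?E \<in> sets (?M \<Otimes>\<^sub>M nu d q)"
      by measurable
    then show ?thesis
      unfolding nu by (rule emeasure_pair_measure_alt)
  qed
  also have "\<dots> = (\<Sum>s\<le>d. emeasure (nu d q) (Pair s -` ?E) * pmf (digit_pmf d q) s)"
    by (rule nn_integral_measure_pmf_support)
       (auto simp: set_pmf_iff pmf_digit_pmf[OF d q] split: if_splits)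
  also have "\<dots> = (\<Sum>s\<le>d. ennreal (digit_weight d q s * F d q (real (d + 1) * x - real s)))"
  proof (rule sum.cong)
    fix s
    have "Pair s -` ?E = {\<omega> \<in> space (nu d q). base_value d (case_nat s \<omega>) \<le> x}"
      by (auto simp: space_pair_measure nu space_PiM)
    then show "emeasure (nu d q) (Pair s -` ?E) * pmf (digit_pmf d q) s
        = ennreal (digit_weight d q s * F d q (real (d + 1) * x - real s))"
      if "s \<in> {..d}"
      using that by (simp add: emeasure_first_digit pmf_digit_pmf[OF d q] ennreal_mult'
          digit_weight_nonneg[OF d q] mult.commute)
  qed simp
  also have "\<dots> = ennreal (\<Sum>s\<le>d. digit_weight d q s * F d q (real (d + 1) * x - real s))"
    by (rule sum_ennreal) (simp add: digit_weight_nonneg[OF d q] F_nonneg)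
  finally show ?thesis
    by (simp add: F_eq_measure_base_value nu.emeasure_eq_measure
        sum_nonneg digit_weight_nonneg[OF d q] F_nonneg)
qed

end

end

definition uniform_cdf :: "real \<Rightarrow> real" where
  "uniform_cdf y = max 0 (min 1 y)"

definition leading_digit :: "nat \<Rightarrow> real \<Rightarrow> nat" where
  "leading_digit d x = nat \<lfloor>real (d + 1) * x\<rfloor>"

definition base_shift :: "nat \<Rightarrow> real \<Rightarrow> real" where
  "base_shift d x = real (d + 1) * x - of_int \<lfloor>real (d + 1) * x\<rfloor>"

lemma uniform_cdf_eq_0: "y < 0 \<Longrightarrow> uniform_cdf y = 0"
  and uniform_cdf_eq_1: "1 \<le> y \<Longrightarrow> uniform_cdf y = 1"
  and uniform_cdf_eq_id: "0 \<le> y \<Longrightarrow> y \<le> 1 \<Longrightarrow> uniform_cdf y = y"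
  and abs_uniform_cdf_le_1: "\<bar>uniform_cdf y\<bar> \<le> 1"
  by (auto simp: uniform_cdf_def)

lemma base_shift_in_unit: "base_shift d x \<in> {0..<1}"
  unfolding base_shift_def by auto linarith

lemma leading_digit_bounds:
  assumes "x \<in> {0..<1}"
  shows "leading_digit d x \<le> d"
    and "real (leading_digit d x) \<le> real (d + 1) * x"
    and "real (d + 1) * x < real (leading_digit d x) + 1"
    and "base_shift d x = real (d + 1) * x - real (leading_digit d x)"
proof -
  have "0 \<le> real (d + 1) * x" "real (d + 1) * x < real (d + 1)"
    using assms by auto
  moreover have floor: "of_int \<lfloor>real (d + 1) * x\<rfloor> = real (leading_digit d x)"
    unfolding leading_digit_def using assms by simp
  ultimately show "real (leading_digit d x) \<le> real (d + 1) * x"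
    and "real (d + 1) * x < real (leading_digit d x) + 1"
    and "leading_digit d x \<le> d"
    by linarith+
  show "base_shift d x = real (d + 1) * x - real (leading_digit d x)"
    unfolding base_shift_def floor ..
qed

text \<open>Only the terms with \<open>m \<le> leading_digit d x\<close> of a self-similarity sum
  see a distribution function at a point of \<open>[0, 1)\<close>: the others are evaluated where it is \<open>0\<close> or \<open>1\<close>.\<close>
lemma sum_cdf_digits:
  fixes g :: "real \<Rightarrow> real" and w :: "nat \<Rightarrow> real"
  assumes x: "x \<in> {0..<1}"
    and g0: "\<And>y. y < 0 \<Longrightarrow> g y = 0" and g1: "\<And>y. 1 \<le> y \<Longrightarrow> g y = 1"
  shows "(\<Sum>m\<le>d. w m * g (real (d + 1) * x - real m))
    = (\<Sum>m<leading_digit d x. w m) + w (leading_digit d x) * g (base_shift d x)"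
proof -
  let ?k = "leading_digit d x"
  note k = leading_digit_bounds[OF x, of d]
  let ?f = "\<lambda>m. w m * g (real (d + 1) * x - real m)"
  have "{..d} = {..<?k} \<union> ({?k} \<union> {?k<..d})"
    using k(1) by auto
  then have split: "(\<Sum>m\<le>d. ?f m) = (\<Sum>m<?k. ?f m) + (?f ?k + (\<Sum>m\<in>{?k<..d}. ?f m))"
    by (simp only:) (subst sum.union_disjoint; auto)+
  have "(\<Sum>m<?k. w m * g (real (d + 1) * x - real m)) = (\<Sum>m<?k. w m)"
  proof (rule sum.cong)
    fix m assume "m \<in> {..<?k}"
    then have "1 \<le> real (d + 1) * x - real m"
      using k(2) by (simp add: less_eq_real_def) linarith
    then show "w m * g (real (d + 1) * x - real m) = w m"
      using g1 by simp
  qed simp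
  moreover have "(\<Sum>m\<in>{?k<..d}. w m * g (real (d + 1) * x - real m)) = 0"
  proof (rule sum.neutral, intro ballI)
    fix m assume "m \<in> {?k<..d}"
    then have "real (d + 1) * x - real m < 0"
      using k(3) by auto
    then show "w m * g (real (d + 1) * x - real m) = 0"
      using g0 by simp
  qed
  ultimately show ?thesis
    unfolding split k(4) by simp
qed

lemma uniform_cdf_self_similar:
  assumes "x \<in> {0..<1}"
  shows "uniform_cdf x = (real (leading_digit d x) + uniform_cdf (base_shift d x)) / real (d + 1)"
  using leading_digit_bounds(4)[OF assms, of d] base_shift_in_unit[of d x] assms
  by (simp add: uniform_cdf_eq_id)

lemma abs_add_divide_le:
  fixes s r c B :: real
  assumes "\<bar>s\<bar> \<le> c" "B > 0"
  shows "\<bar>s + r / B\<bar> \<le> c + \<bar>r\<bar> / B"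
  using abs_triangle_ineq[of s "r / B"] assms by simp

lemma abs_sum_mult_le:
  fixes a f :: "'a \<Rightarrow> real"
  assumes "\<And>m. m \<in> A \<Longrightarrow> \<bar>f m\<bar> \<le> C"
  shows "\<bar>\<Sum>m\<in>A. a m * f m\<bar> \<le> (\<Sum>m\<in>A. \<bar>a m\<bar>) * C"
proof -
  have "\<bar>\<Sum>m\<in>A. a m * f m\<bar> \<le> (\<Sum>m\<in>A. \<bar>a m\<bar> * \<bar>f m\<bar>)"
    using sum_abs[of "\<lambda>m. a m * f m" A] by (simp add: abs_mult)
  also have "\<dots> \<le> (\<Sum>m\<in>A. \<bar>a m\<bar> * C)"
    using assms by (intro sum_mono mult_left_mono) auto
  finally show ?thesis
    by (simp add: sum_distrib_right)
qed

definition weight_dev :: "nat \<Rightarrow> real \<Rightarrow> real" where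
  "weight_dev d q = (\<Sum>m\<le>d. \<bar>digit_weight d q m - 1 / real (d + 1)\<bar>)"

context
  fixes d :: nat and q :: real
  assumes d: "d \<ge> 1" and q: "0 < q" "q < 1"
begin

lemma abs_F_le_1: "\<bar>F d q x\<bar> \<le> 1"
  using F_nonneg[OF d q] F_le_1[OF d q] by simp

lemma abs_F_minus_uniform_cdf_le_2: "\<bar>F d q x - uniform_cdf x\<bar> \<le> 2"
  using abs_F_le_1[of x] abs_uniform_cdf_le_1[of x] by linarith

lemma F_eq_uniform_cdf_outside: "x \<notin> {0..<1} \<Longrightarrow> F d q x = uniform_cdf x"
  by (cases "x < 0") (simp_all add: F_eq_0[OF d q] F_eq_1[OF d q] uniform_cdf_eq_0 uniform_cdf_eq_1)

lemma F_minus_uniform_cdf: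
  assumes x: "x \<in> {0..<1}"
  shows "F d q x - uniform_cdf x
    = (\<Sum>m\<le>d. (digit_weight d q m - 1 / real (d + 1)) * F d q (real (d + 1) * x - real m))
      + (F d q (base_shift d x) - uniform_cdf (base_shift d x)) / real (d + 1)"
proof -
  have "(\<Sum>m\<le>d. 1 * F d q (real (d + 1) * x - real m))
      = real (leading_digit d x) + F d q (base_shift d x)"
    using sum_cdf_digits[OF x, where g="F d q" and w="\<lambda>_. 1"] F_eq_0[OF d q] F_eq_1[OF d q] by simp
  then show ?thesis
    unfolding uniform_cdf_self_similar[OF x, of d] F_self_similar[OF d q, of x]
    by (simp add: algebra_simps sum_subtractf sum_divide_distrib[symmetric]
        add_divide_distrib diff_divide_distrib)
qed

lemma abs_F_minus_uniform_cdf_le: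
  "\<bar>F d q y - uniform_cdf y\<bar> \<le> weight_dev d q * real (d + 1) / real d"
proof (cases "y \<in> {0..<1}")
  case True
  have "\<bar>F d q y - uniform_cdf y\<bar> \<le> weight_dev d q * real (d + 1) / (real (d + 1) - 1)"
  proof (rule abs_le_of_contraction[where E="\<lambda>y. F d q y - uniform_cdf y" and T="base_shift d"
        and S="{0..<1}"])
    fix x :: real
    assume x: "x \<in> {0..<1}"
    have "\<bar>\<Sum>m\<le>d. (digit_weight d q m - 1 / real (d + 1)) * F d q (real (d + 1) * x - real m)\<bar>
        \<le> weight_dev d q"
      using abs_sum_mult_le[OF abs_F_le_1] by (simp add: weight_dev_def)
    then show "\<bar>F d q x - uniform_cdf x\<bar>
        \<le> weight_dev d q + \<bar>F d q (base_shift d x) - uniform_cdf (base_shift d x)\<bar> / real (d + 1)"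
      unfolding F_minus_uniform_cdf[OF x] by (rule abs_add_divide_le) simp
  qed (use d True abs_F_minus_uniform_cdf_le_2 base_shift_in_unit in \<open>auto simp: weight_dev_def\<close>)
  then show ?thesis
    by simp
next
  case False
  then show ?thesis
    using d by (simp add: F_eq_uniform_cdf_outside weight_dev_def sum_nonneg)
qed

end

lemma F_at_uniform_weight:
  assumes d: "d \<ge> 1"
  shows "F d (1 / real (d + 1)) y = uniform_cdf y"
proof -
  have "weight_dev d (1 / real (d + 1)) = 0"
    unfolding weight_dev_def digit_weight_at_uniform[OF d] by simp
  then show ?thesis
    using abs_F_minus_uniform_cdf_le[OF d, of "1 / real (d + 1)" y] d by simp
qed

definition F_deriv_step :: "nat \<Rightarrow> real \<Rightarrow> real" where
  "F_deriv_step d x = (\<Sum>m\<le>d. weight_deriv d m * uniform_cdf (real (d + 1) * x - real m))"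

definition F_deriv :: "nat \<Rightarrow> real \<Rightarrow> real" where
  "F_deriv d x = (\<Sum>n. F_deriv_step d ((base_shift d ^^ n) x) / real (d + 1) ^ n)"

definition weight_deriv_norm :: "nat \<Rightarrow> real" where
  "weight_deriv_norm d = (\<Sum>m\<le>d. \<bar>weight_deriv d m\<bar>)"

lemma abs_F_deriv_step_le: "\<bar>F_deriv_step d x\<bar> \<le> weight_deriv_norm d"
  using abs_sum_mult_le[OF abs_uniform_cdf_le_1]
  by (simp add: F_deriv_step_def weight_deriv_norm_def)

context
  fixes d :: nat
  assumes d: "d \<ge> 1"
begin

lemma F_deriv_terms_le:
  "norm (F_deriv_step d ((base_shift d ^^ n) x) / real (d + 1) ^ n)
    \<le> weight_deriv_norm d * (1 / real (d + 1)) ^ n"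
  using divide_right_mono[OF abs_F_deriv_step_le, of "real (d + 1) ^ n"]
  by (simp add: power_one_over)

lemma sums_F_deriv_bound:
  "(\<lambda>n. weight_deriv_norm d * (1 / real (d + 1)) ^ n) sums (weight_deriv_norm d * real (d + 1) / real d)"
proof -
  have "(\<lambda>n. weight_deriv_norm d * (1 / real (d + 1)) ^ n)
      sums (weight_deriv_norm d * (1 / (1 - 1 / real (d + 1))))"
    using d by (intro sums_mult geometric_sums) auto
  moreover have "1 / (1 - 1 / real (d + 1)) = real (d + 1) / real d"
    using d by (simp add: divide_simps)
  ultimately show ?thesis
    by (metis times_divide_eq_right)
qed

lemma summable_F_deriv: "summable (\<lambda>n. F_deriv_step d ((base_shift d ^^ n) x) / real (d + 1) ^ n)"
  by (rule summable_comparison_test'[OF sums_summable[OF sums_F_deriv_bound] F_deriv_terms_le])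

lemma abs_F_deriv_le: "\<bar>F_deriv d x\<bar> \<le> weight_deriv_norm d * real (d + 1) / real d"
  using norm_suminf_le[OF F_deriv_terms_le[of _ x] sums_summable[OF sums_F_deriv_bound]]
  unfolding F_deriv_def sums_unique[OF sums_F_deriv_bound, symmetric] by simp

lemma F_deriv_self_similar:
  "F_deriv d x = F_deriv_step d x + F_deriv d (base_shift d x) / real (d + 1)"
proof -
  let ?f = "\<lambda>n. F_deriv_step d ((base_shift d ^^ n) x) / real (d + 1) ^ n"
  have "(\<lambda>n. ?f (Suc n))
      = (\<lambda>n. F_deriv_step d ((base_shift d ^^ n) (base_shift d x)) / real (d + 1) ^ n / real (d + 1))"
    by (simp add: funpow_swap1 divide_divide_eq_left mult.commute)
  then have "(\<Sum>n. ?f (Suc n)) = F_deriv d (base_shift d x) / real (d + 1)"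
    unfolding F_deriv_def by (simp only: suminf_divide[OF summable_F_deriv])
  then show ?thesis
    unfolding F_deriv_def using suminf_split_head[OF summable_F_deriv[of x]] by simp
qed

end

definition slope_dev :: "nat \<Rightarrow> real \<Rightarrow> real" where
  "slope_dev d q = (\<Sum>m\<le>d. \<bar>(digit_weight d q m - 1 / real (d + 1)) / (q - 1 / real (d + 1))
                              - weight_deriv d m\<bar>)"

definition quotient_error :: "nat \<Rightarrow> real \<Rightarrow> real \<Rightarrow> real" where
  "quotient_error d q y = (F d q y - uniform_cdf y) / (q - 1 / real (d + 1)) - F_deriv d y"

context
  fixes d :: nat and q :: real
  assumes d: "d \<ge> 1" and q: "0 < q" "q < 1"
begin

lemma quotient_error_contracts:
  assumes x: "x \<in> {0..<1}"
  shows "\<bar>quotient_error d q x\<bar>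
    \<le> slope_dev d q + weight_deriv_norm d * (weight_dev d q * real (d + 1) / real d)
       + \<bar>quotient_error d q (base_shift d x)\<bar> / real (d + 1)"
proof -
  let ?q0 = "1 / real (d + 1)" and ?y = "\<lambda>m. real (d + 1) * x - real m"
  let ?slope = "\<lambda>m. (digit_weight d q m - ?q0) / (q - ?q0)"
  let ?S1 = "\<Sum>m\<le>d. (?slope m - weight_deriv d m) * F d q (?y m)"
  let ?S2 = "\<Sum>m\<le>d. weight_deriv d m * (F d q (?y m) - uniform_cdf (?y m))"
  have "(\<Sum>m\<le>d. (digit_weight d q m - ?q0) * F d q (?y m)) / (q - ?q0) - F_deriv_step d x = ?S1 + ?S2"
    unfolding F_deriv_step_def sum_divide_distrib sum.distrib[symmetric] sum_subtractf[symmetric]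
    by (rule sum.cong) (simp_all add: algebra_simps)
  then have "quotient_error d q x = (?S1 + ?S2) + quotient_error d q (base_shift d x) / real (d + 1)"
    unfolding quotient_error_def F_minus_uniform_cdf[OF d q x] F_deriv_self_similar[OF d, of x]
    by (simp add: add_divide_distrib diff_divide_distrib) (simp add: mult.commute)
  moreover have "\<bar>?S1\<bar> \<le> slope_dev d q"
    using abs_sum_mult_le[OF abs_F_le_1[OF d q]] by (simp add: slope_dev_def)
  moreover have "\<bar>?S2\<bar> \<le> weight_deriv_norm d * (weight_dev d q * real (d + 1) / real d)"
    using abs_sum_mult_le[OF abs_F_minus_uniform_cdf_le[OF d q]] by (simp add: weight_deriv_norm_def)
  ultimately show ?thesis
    using abs_add_divide_le[of "?S1 + ?S2" _ "real (d + 1)" "quotient_error d q (base_shift d x)"]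
      abs_triangle_ineq[of ?S1 ?S2] by simp
qed

lemma abs_quotient_error_le:
  assumes x: "x \<in> {0..<1}"
  shows "\<bar>quotient_error d q x\<bar>
    \<le> (slope_dev d q + weight_deriv_norm d * (weight_dev d q * real (d + 1) / real d))
       * real (d + 1) / real d"
proof -
  have "\<bar>quotient_error d q y\<bar> \<le> 2 / \<bar>q - 1 / real (d + 1)\<bar> + weight_deriv_norm d * real (d + 1) / real d"
    for y
  proof -
    have "\<bar>(F d q y - uniform_cdf y) / (q - 1 / real (d + 1))\<bar> \<le> 2 / \<bar>q - 1 / real (d + 1)\<bar>"
      unfolding abs_divide by (rule divide_right_mono[OF abs_F_minus_uniform_cdf_le_2[OF d q]]) simp
    then show ?thesis
      using abs_F_deriv_le[OF d, of y] unfolding quotient_error_def by linarith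
  qed
  moreover have "0 \<le> slope_dev d q + weight_deriv_norm d * (weight_dev d q * real (d + 1) / real d)"
    by (simp add: slope_dev_def weight_deriv_norm_def weight_dev_def sum_nonneg)
  ultimately have "\<bar>quotient_error d q x\<bar>
      \<le> (slope_dev d q + weight_deriv_norm d * (weight_dev d q * real (d + 1) / real d))
         * real (d + 1) / (real (d + 1) - 1)"
    using d quotient_error_contracts base_shift_in_unit
    by (intro abs_le_of_contraction[where T="base_shift d" and S="{0..<1}", OF _ _ _ _ _ x]) auto
  then show ?thesis
    by simp
qed

end

context
  fixes d :: nat
  assumes d: "d \<ge> 1"
begin

lemma tendsto_weight_dev: "(weight_dev d \<longlongrightarrow> 0) (at (1 / real (d + 1)))"
proof -
  have "((\<lambda>q. digit_weight d q m) \<longlongrightarrow> 1 / real (d + 1)) (at (1 / real (d + 1)))" for m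
    using DERIV_isCont[OF DERIV_digit_weight[OF d, of m]] digit_weight_at_uniform[OF d, of m]
    by (metis isContD)
  then show ?thesis
    unfolding weight_dev_def[abs_def] by (intro tendsto_null_sum tendsto_rabs_zero LIM_zero)
qed

lemma tendsto_slope_dev: "(slope_dev d \<longlongrightarrow> 0) (at (1 / real (d + 1)))"
proof -
  have "((\<lambda>q. (digit_weight d q m - 1 / real (d + 1)) / (q - 1 / real (d + 1))) \<longlongrightarrow> weight_deriv d m)
      (at (1 / real (d + 1)))" for m
    using DERIV_digit_weight[OF d, of m]
    unfolding has_field_derivative_iff digit_weight_at_uniform[OF d] .
  then show ?thesis
    unfolding slope_dev_def[abs_def] by (intro tendsto_null_sum tendsto_rabs_zero LIM_zero)
qed

lemma DERIV_F:
  assumes x: "x \<in> {0..<1}"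
  shows "((\<lambda>q. F d q x) has_real_derivative F_deriv d x) (at (1 / real (d + 1)))"
proof -
  let ?q0 = "1 / real (d + 1)"
  let ?bound = "\<lambda>q. (slope_dev d q + weight_deriv_norm d * (weight_dev d q * real (d + 1) / real d))
                     * real (d + 1) / real d"
  have "eventually (\<lambda>q. q \<in> {0<..<1}) (at ?q0)"
    using d by (intro eventually_at_in_open') auto
  then have "eventually (\<lambda>q. norm (quotient_error d q x) \<le> ?bound q) (at ?q0)"
    by eventually_elim (use abs_quotient_error_le[OF d _ _ x] in auto)
  moreover have "(?bound \<longlongrightarrow> 0) (at ?q0)"
    using tendsto_slope_dev tendsto_weight_dev
    by (intro tendsto_mult_left_zero tendsto_divide_zero tendsto_add_zero tendsto_mult_right_zero)
  ultimately have "((\<lambda>q. quotient_error d q x) \<longlongrightarrow> 0) (at ?q0)"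
    by (rule Lim_null_comparison)
  then have "((\<lambda>q. (F d q x - F d ?q0 x) / (q - ?q0) - F_deriv d x) \<longlongrightarrow> 0) (at ?q0)"
    unfolding F_at_uniform_weight[OF d] by (simp add: quotient_error_def)
  then have "((\<lambda>q. (F d q x - F d ?q0 x) / (q - ?q0)) \<longlongrightarrow> F_deriv d x) (at ?q0)"
    by (rule LIM_zero_cancel)
  then show ?thesis
    unfolding has_field_derivative_iff .
qed

lemma DERIV_F_ge_1:
  assumes "1 \<le> x"
  shows "((\<lambda>q. F d q x) has_real_derivative 0) (at (1 / real (d + 1)))"
proof -
  have "eventually (\<lambda>q. q \<in> {0<..<1}) (nhds (1 / real (d + 1)))"
    using d by (intro eventually_nhds_in_open) auto
  then have "eventually (\<lambda>q. F d q x = 1) (nhds (1 / real (d + 1)))"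
    by eventually_elim (use F_eq_1[OF d _ _ assms] in auto)
  then show ?thesis
    by (subst DERIV_cong_ev[OF refl _ refl]) auto
qed

end

lemma parabola_bounds:
  fixes x :: real
  assumes "0 \<le> x" "x \<le> 1"
  shows "0 \<le> x * (1 - x)" "x * (1 - x) \<le> 1 / 4"
proof -
  show "0 \<le> x * (1 - x)"
    using assms by simp
  have "x * (1 - x) = 1 / 4 - (x - 1 / 2)\<^sup>2"
    by (simp add: power2_eq_square algebra_simps)
  then show "x * (1 - x) \<le> 1 / 4"
    by simp
qed

definition parabola_error :: "nat \<Rightarrow> real \<Rightarrow> real" where
  "parabola_error d x = F_deriv d x / real (d + 1) - x * (1 - x)"

context
  fixes d :: nat
  assumes d: "d \<ge> 1"
begin

lemma F_deriv_step_eq: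
  assumes x: "x \<in> {0..<1}"
  shows "F_deriv_step d x
    = real (d + 1) ^ 2 / real d * (x * (1 - x)) - base_shift d x * (1 - base_shift d x) / real d"
proof -
  let ?k = "real (leading_digit d x)" and ?y = "base_shift d x"
  have y: "0 \<le> ?y" "?y \<le> 1"
    using base_shift_in_unit[of d x] by auto
  have "F_deriv_step d x = (\<Sum>m<leading_digit d x. weight_deriv d m) + weight_deriv d (leading_digit d x) * ?y"
    unfolding F_deriv_step_def
    using sum_cdf_digits[OF x, where g=uniform_cdf] uniform_cdf_eq_0 uniform_cdf_eq_1 uniform_cdf_eq_id[OF y]
    by simp
  also have "(\<Sum>m<leading_digit d x. weight_deriv d m) = ?k - 2 / real d * (?k * (?k - 1) / 2)"
    by (simp add: weight_deriv_def sum_subtractf sum_distrib_left[symmetric] sum_divide_distrib[symmetric]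
        sum_of_nat_lessThan)
  finally have step: "F_deriv_step d x = ?k - ?k * (?k - 1) / real d + (1 - 2 * ?k / real d) * ?y"
    by (simp add: weight_deriv_def)
  have x_digits: "x = (?k + ?y) / real (d + 1)"
    using leading_digit_bounds(4)[OF x, of d] by (simp add: field_simps)
  have parabola: "k - k * (k - 1) / D + (1 - 2 * k / D) * y = B ^ 2 / D * (z * (1 - z)) - y * (1 - y) / D"
    if "z = (k + y) / B" "B = D + 1" "D > 0" for k y z B D :: real
  proof -
    have "B ^ 2 / D * (z * (1 - z)) = (z * B) * (B - z * B) / D"
      by (simp add: power2_eq_square algebra_simps)
    also have "\<dots> = (k + y) * (D + 1 - (k + y)) / D"
      using that by (simp add: divide_simps)
    finally have "B ^ 2 / D * (z * (1 - z)) = (k + y) * (D + 1 - (k + y)) / D" .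
    then show ?thesis
      using that(3) by (simp add: divide_simps) (simp add: algebra_simps)
  qed
  show ?thesis
    unfolding step by (rule parabola[OF x_digits]) (use d in simp_all)
qed

lemma parabola_error_self_similar:
  assumes x: "x \<in> {0..<1}"
  defines "y \<equiv> base_shift d x"
  shows "parabola_error d x
    = x * (1 - x) / real d + y * (1 - y) * (real d - 1) / (real d * real (d + 1))
      + parabola_error d y / real (d + 1)"
proof -
  have deriv_x: "F_deriv d x = real (d + 1) ^ 2 / real d * (x * (1 - x)) - y * (1 - y) / real d
      + F_deriv d y / real (d + 1)"
    unfolding y_def F_deriv_self_similar[OF d, of x] F_deriv_step_eq[OF x] ..
  have algebra: "F' / B - h = h / D + g * (D - 1) / (D * B) + (G / B - g) / B"
    if "F' = B ^ 2 / D * h - g / D + G / B" "B = D + 1" "D > 0" for F' G h g B D :: real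
  proof -
    have "B \<noteq> 0" "D \<noteq> 0"
      using that by simp_all
    then show ?thesis
      unfolding that(1) by (simp add: field_simps power2_eq_square) (simp add: that(2) algebra_simps)
  qed
  show ?thesis
    unfolding parabola_error_def by (rule algebra[OF deriv_x]) (use d in simp_all)
qed

lemma parabola_error_contracts:
  assumes z: "z \<in> {0..<1}"
  shows "\<bar>parabola_error d z\<bar> \<le> 1 / (2 * real d) + \<bar>parabola_error d (base_shift d z)\<bar> / real (d + 1)"
proof -
  let ?y = "base_shift d z"
  have "0 \<le> ?y" "?y \<le> 1" "0 \<le> z" "z \<le> 1"
    using base_shift_in_unit[of d z] z by auto
  note y = parabola_bounds[OF this(1,2)] and h = parabola_bounds[OF this(3,4)]
  let ?w = "(real d - 1) / (real d * real (d + 1))"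
  have w: "0 \<le> ?w" "?w \<le> 1 / real d"
    using d by (auto simp: divide_simps)
  have "0 \<le> ?y * (1 - ?y) * ?w"
    by (rule mult_nonneg_nonneg[OF y(1) w(1)])
  moreover have "?y * (1 - ?y) * ?w \<le> 1 / 4 * (1 / real d)"
    by (rule mult_mono[OF y(2) w(2) _ w(1)]) simp
  moreover have "0 \<le> z * (1 - z) / real d"
    using h(1) by simp
  moreover have "z * (1 - z) / real d \<le> 1 / 4 * (1 / real d)"
    using divide_right_mono[OF h(2), of "real d"] by simp
  ultimately have "\<bar>z * (1 - z) / real d + ?y * (1 - ?y) * ?w\<bar> \<le> 1 / (2 * real d)"
    by (simp add: abs_le_iff)
  then show ?thesis
    unfolding parabola_error_self_similar[OF z] times_divide_eq_right[symmetric]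
    by (rule abs_add_divide_le) simp
qed

lemma abs_parabola_error_le:
  assumes x: "x \<in> {0..<1}"
  shows "\<bar>parabola_error d x\<bar> \<le> 1 / real d"
proof -
  have d_pos: "real d > 0"
    using d by simp
  have bounded: "\<bar>parabola_error d z\<bar> \<le> weight_deriv_norm d * real (d + 1) / real d + 1"
    if "z \<in> {0..<1}" for z
  proof -
    have "\<bar>F_deriv d z / real (d + 1)\<bar> \<le> \<bar>F_deriv d z\<bar>"
      using mult_left_mono[of 1 "real (d + 1)" "\<bar>F_deriv d z\<bar>"] by (simp add: abs_divide divide_le_eq)
    moreover have "\<bar>parabola_error d z\<bar> \<le> \<bar>F_deriv d z / real (d + 1)\<bar> + \<bar>z * (1 - z)\<bar>"
      unfolding parabola_error_def by (rule abs_triangle_ineq4)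
    moreover have "\<bar>z * (1 - z)\<bar> \<le> 1"
      using parabola_bounds[of z] that by auto
    ultimately show ?thesis
      using abs_F_deriv_le[OF d, of z] by linarith
  qed
  have "\<bar>parabola_error d x\<bar> \<le> 1 / (2 * real d) * real (d + 1) / (real (d + 1) - 1)"
    using d_pos bounded base_shift_in_unit parabola_error_contracts
    by (intro abs_le_of_contraction[where T="base_shift d" and S="{0..<1}", OF _ _ _ _ _ x]) auto
  also have "\<dots> \<le> 1 / real d"
    using d d_pos by (simp add: divide_simps)
  finally show ?thesis .
qed

end

lemma Ttilde_eq_F_deriv:
  assumes "d \<ge> 1" "x \<in> {0..<1}"
  shows "Ttilde d x = F_deriv d x / real (d + 1)"
  unfolding Ttilde_def DERIV_imp_deriv[OF DERIV_F[OF assms]] by simp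

lemma abs_Ttilde_minus_parabola_le:
  assumes d: "d \<ge> 1" and x: "x \<in> {0..1}"
  shows "\<bar>Ttilde d x - x * (1 - x)\<bar> \<le> 1 / real d"
proof (cases "x < 1")
  case True
  then show ?thesis
    using abs_parabola_error_le[OF d] x
    by (simp add: Ttilde_eq_F_deriv[OF d] parabola_error_def)
next
  case False
  then have "1 \<le> x"
    by simp
  with x show ?thesis
    unfolding Ttilde_def DERIV_imp_deriv[OF DERIV_F_ge_1[OF d \<open>1 \<le> x\<close>]] by simp
qed

lemma tendsto_SUP_ereal_0:
  fixes f :: "nat \<Rightarrow> 'a \<Rightarrow> real"
  assumes "A \<noteq> {}" and bound: "\<And>d x. d \<ge> 1 \<Longrightarrow> x \<in> A \<Longrightarrow> \<bar>f d x\<bar> \<le> 1 / real d"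
  shows "(\<lambda>d. SUP x\<in>A. ereal \<bar>f d x\<bar>) \<longlonglongrightarrow> 0"
proof (rule tendsto_sandwich[OF _ _ tendsto_const])
  show "eventually (\<lambda>d. 0 \<le> (SUP x\<in>A. ereal \<bar>f d x\<bar>)) sequentially"
    using \<open>A \<noteq> {}\<close> by (intro always_eventually allI) (auto intro: SUP_upper2)
  show "eventually (\<lambda>d. (SUP x\<in>A. ereal \<bar>f d x\<bar>) \<le> ereal (1 / real d)) sequentially"
    using eventually_ge_at_top[of 1] by eventually_elim (use bound in \<open>auto intro: SUP_least\<close>)
  show "(\<lambda>d. ereal (1 / real d)) \<longlonglongrightarrow> 0"
    using tendsto_ereal[OF lim_inverse_n'] by (simp add: zero_ereal_def)
qed

theorem mainTheorem10:
  shows "(\<forall>d::nat. d \<ge> 1 \<longrightarrow> (\<forall>x\<in>{0..1::real}.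
            (\<exists>D. ((\<lambda>q. F d q x) has_real_derivative D) (at (1 / real (d + 1))))))
       \<and> ((\<lambda>d. SUP x\<in>{0..1::real}. ereal \<bar>Ttilde d x - x * (1 - x)\<bar>) \<longlonglongrightarrow> 0)"
proof
  show "\<forall>d::nat. d \<ge> 1 \<longrightarrow> (\<forall>x\<in>{0..1::real}.
      \<exists>D. ((\<lambda>q. F d q x) has_real_derivative D) (at (1 / real (d + 1))))"
    using DERIV_F DERIV_F_ge_1 by (metis atLeastAtMost_iff atLeastLessThan_iff not_le)
  show "(\<lambda>d. SUP x\<in>{0..1::real}. ereal \<bar>Ttilde d x - x * (1 - x)\<bar>) \<longlonglongrightarrow> 0"
    by (rule tendsto_SUP_ereal_0) (auto intro: abs_Ttilde_minus_parabola_le)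
qed

end
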